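(* If a partial coloring of an $n\times n$ square $A$ uniquely extends to $L(n,2n-2)$, then there are no rows $i_1\neq i_2$ and columns $j_1\neq j_2$ such that all four entries $(i_1,j_1),(i_1,j_2),(i_2,j_1),(i_2,j_2)$ are uncolored.
   Context: For positive integers $n,k$, let $\mathcal{L}_{n,k}$ be the set of $n\times n$ squares all of whose entries are colored with colors from a fixed set of $k$ colors $\{1,\dots,k\}$ such that any two entries in the same row, or in the same column, have different colors. Entries are indexed $(i,j)$, $i$ the row and $j$ the column. A partial coloring of an $n\times n$ square assigns colors from $\{1,\dots,k\}$ to some of its entries; the remaining entries are called uncolored. A partial coloring extends to $L(n,k)$ if the uncolored entries can be colored so that the resulting fully colored square lies in $\mathcal{L}_{n,k}$ (keeping the given colors), and it uniquely extends to $L(n,k)$ if there is exactly one such way. *)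

theory Defs
  imports Main
begin

text \<open>A full coloring is a function nat => nat => nat; it is normalized to be 0
  outside the n x n square so that distinct colorings of the square are
  distinct functions.\<close>

definition in_L :: "nat \<Rightarrow> nat \<Rightarrow> (nat \<Rightarrow> nat \<Rightarrow> nat) \<Rightarrow> bool" where
  "in_L n k L \<longleftrightarrow>
     (\<forall>i j. (i < n \<and> j < n) \<longrightarrow> L i j \<in> {1..k}) \<and>
     (\<forall>i j. \<not> (i < n \<and> j < n) \<longrightarrow> L i j = 0) \<and>
     (\<forall>i j j'. i < n \<and> j < n \<and> j' < n \<and> j \<noteq> j' \<longrightarrow> L i j \<noteq> L i j') \<and>
     (\<forall>i i' j. i < n \<and> i' < n \<and> j < n \<and> i \<noteq> i' \<longrightarrow> L i j \<noteq> L i' j)"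

definition partial_coloring :: "nat \<Rightarrow> nat \<Rightarrow> (nat \<Rightarrow> nat \<Rightarrow> nat option) \<Rightarrow> bool" where
  "partial_coloring n k A \<longleftrightarrow>
     (\<forall>i j c. A i j = Some c \<longrightarrow> i < n \<and> j < n \<and> c \<in> {1..k})"

definition extends_to :: "nat \<Rightarrow> nat \<Rightarrow> (nat \<Rightarrow> nat \<Rightarrow> nat option) \<Rightarrow> (nat \<Rightarrow> nat \<Rightarrow> nat) \<Rightarrow> bool" where
  "extends_to n k A L \<longleftrightarrow> in_L n k L \<and> (\<forall>i j c. A i j = Some c \<longrightarrow> L i j = c)"

definition uniquely_extends :: "nat \<Rightarrow> nat \<Rightarrow> (nat \<Rightarrow> nat \<Rightarrow> nat option) \<Rightarrow> bool" where
  "uniquely_extends n k A \<longleftrightarrow> (\<exists>!L. extends_to n k A L)"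

end

theory Submission
  imports Defs
begin

text \<open>Let \<open>L\<close> be the unique extension and suppose the \<open>2 \<times> 2\<close> subsquare on rows \<open>i1, i2\<close> and
  columns \<open>j1, j2\<close> is uncoloured in \<open>A\<close>. Each of its four cells sees at most \<open>2n - 4\<close> colours in
  its row and column outside the subsquare, so besides its current colour it has a second colour
  among the \<open>2n - 2\<close> that is compatible with everything outside the subsquare. The four cells form
  a \<open>4\<close>-cycle of conflicts, and a \<open>4\<close>-cycle properly coloured from two-element lists always admits
  a second proper colouring from the same lists. Recolouring the subsquare accordingly yields a
  different extension of \<open>A\<close>.\<close>

lemma in_L_iff_inj_on:
  "in_L n k L \<longleftrightarrow>
     (\<forall>i<n. \<forall>j<n. L i j \<in> {1..k}) \<and> (\<forall>i j. \<not> (i < n \<and> j < n) \<longrightarrow> L i j = 0) \<and>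
     (\<forall>i<n. inj_on (L i) {..<n}) \<and> (\<forall>j<n. inj_on (\<lambda>i. L i j) {..<n})"
  unfolding in_L_def inj_on_def by blast

lemma inj_on_fun_upd2:
  assumes "inj_on g S" "a \<noteq> b" "u \<noteq> v" "u \<notin> g ` (S - {a, b})" "v \<notin> g ` (S - {a, b})"
  shows "inj_on (g(a := u, b := v)) S"
  using assms unfolding inj_on_def by (simp add: image_iff) (metis insert_iff Diff_iff singletonD)

lemma four_cycle_second_list_colouring:
  fixes a b c d a' b' c' d' :: nat
  assumes "a \<noteq> b" "a \<noteq> c" "b \<noteq> d" "c \<noteq> d" "a' \<noteq> a" "b' \<noteq> b" "c' \<noteq> c" "d' \<noteq> d"
  shows "\<exists>x\<in>{a, a'}. \<exists>y\<in>{b, b'}. \<exists>z\<in>{c, c'}. \<exists>w\<in>{d, d'}.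
           x \<noteq> y \<and> x \<noteq> z \<and> y \<noteq> w \<and> z \<noteq> w \<and> (x, y, z, w) \<noteq> (a, b, c, d)"
  using assms by (smt (verit) insertI1 insertI2 prod.inject)

definition free_colours ::
    "nat \<Rightarrow> nat \<Rightarrow> (nat \<Rightarrow> nat \<Rightarrow> nat) \<Rightarrow> nat set \<Rightarrow> nat set \<Rightarrow> nat \<Rightarrow> nat \<Rightarrow> nat set" where
  "free_colours n k L I J p q =
     {c \<in> {1..k}. c \<notin> L p ` ({..<n} - J) \<and> c \<notin> (\<lambda>i. L i q) ` ({..<n} - I)}"

lemma in_L_entry_in_free_colours:
  assumes "in_L n k L" "p \<in> I" "q \<in> J" "p < n" "q < n"
  shows "L p q \<in> free_colours n k L I J p q"
  using assms unfolding free_colours_def in_L_def by blast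

lemma exists_other_free_colour:
  assumes "i1 < n" "i2 < n" "j1 < n" "j2 < n" "i1 \<noteq> i2" "j1 \<noteq> j2"
  shows "\<exists>c \<in> free_colours n (2*n-2) L {i1, i2} {j1, j2} p q. c \<noteq> L p q"
proof -
  define R C where "R = L p ` ({..<n} - {j1, j2})" and "C = (\<lambda>i. L i q) ` ({..<n} - {i1, i2})"
  have "finite R" "finite C"
    unfolding R_def C_def by simp_all
  then have "card (insert (L p q) (R \<union> C)) \<le> Suc (card (R \<union> C))"
    by (simp add: card_insert_if)
  also have "\<dots> \<le> Suc (card R + card C)"
    by (simp add: card_Un_le)
  also have "\<dots> \<le> Suc (card ({..<n} - {j1, j2}) + card ({..<n} - {i1, i2}))"
    unfolding R_def C_def by (simp add: add_mono card_image_le)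
  also have "\<dots> = Suc ((n - 2) + (n - 2))"
    using assms by (simp add: card_Diff_subset)
  also have "\<dots> < card {1..2*n-2}"
    using assms by simp
  finally have "\<not> {1..2*n-2} \<subseteq> insert (L p q) (R \<union> C)"
    using \<open>finite R\<close> \<open>finite C\<close> by (meson card_mono finite_Un finite_insert not_le)
  then show ?thesis
    unfolding free_colours_def R_def C_def by blast
qed

lemma in_L_recolour_subsquare:
  assumes L: "in_L n k L"
    and "i1 < n" "i2 < n" "j1 < n" "j2 < n" "i1 \<noteq> i2" "j1 \<noteq> j2"
    and "x \<in> free_colours n k L {i1, i2} {j1, j2} i1 j1"
        "y \<in> free_colours n k L {i1, i2} {j1, j2} i1 j2"
        "z \<in> free_colours n k L {i1, i2} {j1, j2} i2 j1"
        "w \<in> free_colours n k L {i1, i2} {j1, j2} i2 j2"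
    and "x \<noteq> y" "z \<noteq> w" "x \<noteq> z" "y \<noteq> w"
  shows "in_L n k (L(i1 := (L i1)(j1 := x, j2 := y), i2 := (L i2)(j1 := z, j2 := w)))"
    (is "in_L n k ?L'")
proof -
  note L_props = L[unfolded in_L_iff_inj_on]
  note free = assms(8-11)[unfolded free_colours_def, simplified]
  have rows: "?L' i1 = (L i1)(j1 := x, j2 := y)" "?L' i2 = (L i2)(j1 := z, j2 := w)"
    "i \<noteq> i1 \<Longrightarrow> i \<noteq> i2 \<Longrightarrow> ?L' i = L i" for i
    using assms by auto
  have columns: "(\<lambda>i. ?L' i j1) = (\<lambda>i. L i j1)(i1 := x, i2 := z)"
    "(\<lambda>i. ?L' i j2) = (\<lambda>i. L i j2)(i1 := y, i2 := w)"
    "j \<noteq> j1 \<Longrightarrow> j \<noteq> j2 \<Longrightarrow> (\<lambda>i. ?L' i j) = (\<lambda>i. L i j)" for j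
    using assms by auto
  have "inj_on (?L' i) {..<n}" if "i < n" for i
  proof -
    consider "i = i1" | "i = i2" | "i \<noteq> i1" "i \<noteq> i2" by blast
    then show ?thesis
    proof cases
      case 1
      show ?thesis
        unfolding 1 rows by (rule inj_on_fun_upd2) (use L_props assms free in simp_all)
    next
      case 2
      show ?thesis
        unfolding 2 rows by (rule inj_on_fun_upd2) (use L_props assms free in simp_all)
    next
      case 3
      show ?thesis
        unfolding rows(3)[OF 3] using that L_props by blast
    qed
  qed
  moreover have "inj_on (\<lambda>i. ?L' i j) {..<n}" if "j < n" for j
  proof -
    consider "j = j1" | "j = j2" | "j \<noteq> j1" "j \<noteq> j2" by blast
    then show ?thesis
    proof cases
      case 1
      show ?thesis
        unfolding 1 columns by (rule inj_on_fun_upd2) (use L_props assms free in simp_all)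
    next
      case 2
      show ?thesis
        unfolding 2 columns by (rule inj_on_fun_upd2) (use L_props assms free in simp_all)
    next
      case 3
      show ?thesis
        unfolding columns(3)[OF 3] using that L_props by blast
    qed
  qed
  ultimately show ?thesis
    unfolding in_L_iff_inj_on using L_props assms free by auto
qed

lemma in_L_exists_recolouring_of_subsquare:
  assumes L: "in_L n (2*n-2) L"
    and ij: "i1 < n" "i2 < n" "j1 < n" "j2 < n" "i1 \<noteq> i2" "j1 \<noteq> j2"
  shows "\<exists>L'. in_L n (2*n-2) L' \<and> L' \<noteq> L \<and>
           (\<forall>i j. i \<notin> {i1, i2} \<or> j \<notin> {j1, j2} \<longrightarrow> L' i j = L i j)"
proof -
  let ?free = "free_colours n (2*n-2) L {i1, i2} {j1, j2}"
  obtain a' b' c' d' where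
    "a' \<in> ?free i1 j1" "a' \<noteq> L i1 j1" "b' \<in> ?free i1 j2" "b' \<noteq> L i1 j2"
    "c' \<in> ?free i2 j1" "c' \<noteq> L i2 j1" "d' \<in> ?free i2 j2" "d' \<noteq> L i2 j2"
    using exists_other_free_colour[OF ij] by meson
  moreover have "L i1 j1 \<noteq> L i1 j2" "L i1 j1 \<noteq> L i2 j1" "L i1 j2 \<noteq> L i2 j2" "L i2 j1 \<noteq> L i2 j2"
    using L ij unfolding in_L_def by blast+
  moreover have "L i1 j1 \<in> ?free i1 j1" "L i1 j2 \<in> ?free i1 j2"
    "L i2 j1 \<in> ?free i2 j1" "L i2 j2 \<in> ?free i2 j2"
    using in_L_entry_in_free_colours[OF L] ij by simp_all
  ultimately obtain x y z w where
    "x \<in> ?free i1 j1" "y \<in> ?free i1 j2" "z \<in> ?free i2 j1" "w \<in> ?free i2 j2"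
    "x \<noteq> y" "x \<noteq> z" "y \<noteq> w" "z \<noteq> w" "(x, y, z, w) \<noteq> (L i1 j1, L i1 j2, L i2 j1, L i2 j2)"
    using four_cycle_second_list_colouring[of "L i1 j1" "L i1 j2" "L i2 j1" "L i2 j2" a' b' c' d']
    by blast
  define L' where "L' = L(i1 := (L i1)(j1 := x, j2 := y), i2 := (L i2)(j1 := z, j2 := w))"
  have "in_L n (2*n-2) L'"
    unfolding L'_def by (rule in_L_recolour_subsquare) fact+
  moreover have "(L' i1 j1, L' i1 j2, L' i2 j1, L' i2 j2) = (x, y, z, w)"
    using ij by (simp add: L'_def)
  then have "L' \<noteq> L"
    using \<open>(x, y, z, w) \<noteq> _\<close> by auto
  moreover have "\<forall>i j. i \<notin> {i1, i2} \<or> j \<notin> {j1, j2} \<longrightarrow> L' i j = L i j"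
    by (simp add: L'_def)
  ultimately show ?thesis
    by blast
qed

theorem lemma2:
  fixes n :: nat and A :: "nat \<Rightarrow> nat \<Rightarrow> nat option"
  assumes "partial_coloring n (2 * n - 2) A"
    and "uniquely_extends n (2 * n - 2) A"
  shows "\<not> (\<exists>i1 i2 j1 j2. i1 < n \<and> i2 < n \<and> j1 < n \<and> j2 < n \<and> i1 \<noteq> i2 \<and> j1 \<noteq> j2 \<and>
            A i1 j1 = None \<and> A i1 j2 = None \<and> A i2 j1 = None \<and> A i2 j2 = None)"
proof (intro notI, elim exE conjE)
  fix i1 i2 j1 j2
  assume ij: "i1 < n" "i2 < n" "j1 < n" "j2 < n" "i1 \<noteq> i2" "j1 \<noteq> j2"
    and uncoloured: "A i1 j1 = None" "A i1 j2 = None" "A i2 j1 = None" "A i2 j2 = None"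
  obtain L where L: "extends_to n (2*n-2) A L"
    and unique: "\<And>L'. extends_to n (2*n-2) A L' \<Longrightarrow> L' = L"
    using assms(2) unfolding uniquely_extends_def by blast
  then obtain L' where "in_L n (2*n-2) L'" "L' \<noteq> L"
    and agree: "\<forall>i j. i \<notin> {i1, i2} \<or> j \<notin> {j1, j2} \<longrightarrow> L' i j = L i j"
    using in_L_exists_recolouring_of_subsquare[OF _ ij] unfolding extends_to_def by blast
  moreover have "\<forall>i j c. A i j = Some c \<longrightarrow> L' i j = c"
    using L agree uncoloured unfolding extends_to_def by (metis insert_iff option.distinct(1) singletonD)
  ultimately show False
    using unique unfolding extends_to_def by blast
qed

end
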